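(* Let $A,B\in M_\ell(F)$ commute, let $F_A$ be an idempotent associated with $A$, and let $Q''_L=\mathrm{CSS}(A,(H_Z)_L)$ with $(H_Z)_L=(B(I-F_A))^T$. Suppose $A$ is block-diagonal, i.e., there is a partition of the index set $\{1,\dots,\ell\}$ into consecutive intervals each of size at most $m$ such that $A_{ij}=0$ whenever $i,j$ lie in different intervals. If $Q''_L$ is non-trivial (its dimension $\ell-\mathrm{rank}A-\mathrm{rank}(B(I-F_A))$ is positive), then $d_Z(Q''_L)\le m$.
   Context: $F=\mathbb F_q$ is a finite field. For $H_X,H_Z$ with $n$ columns and $H_XH_Z^T=0$, $\mathrm{CSS}(H_X,H_Z)$ has dimension $n-\mathrm{rank}H_X-\mathrm{rank}H_Z$ and $Z$-distance $d_Z=\min\{\mathrm{wgt}(c):c\in C_{H_X}^\perp\setminus C_{H_Z}\}$, with $C_H$ the row space of $H$ and $C_H^\perp$ its orthogonal complement. An idempotent associated with $A$ on the right is any $F_A$ with $F_A^2=F_A$, $\mathrm{rank}F_A=\mathrm{rank}A$, $AF_A=A$. Note $A(B(I-F_A))=B(A-AF_A)=0$, so $Q''_L$ is a stabilizer CSS code. *)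

theory Defs
  imports "Jordan_Normal_Form.DL_Rank"
begin

definition mrank :: "nat \<Rightarrow> 'a::field mat \<Rightarrow> nat" where
  "mrank n H = vec_space.rank n H"

definition rowsp :: "nat \<Rightarrow> 'a::field mat \<Rightarrow> 'a vec set" where
  "rowsp n H = vec_space.row_space n H"

definition orthc :: "nat \<Rightarrow> 'a::field vec set \<Rightarrow> 'a vec set" where
  "orthc n C = {c \<in> carrier_vec n. \<forall>r\<in>C. r \<bullet> c = 0}"

definition wgt :: "'a::zero vec \<Rightarrow> nat" where
  "wgt c = card {i. i < dim_vec c \<and> c $ i \<noteq> 0}"

definition css_dim :: "nat \<Rightarrow> 'a::field mat \<Rightarrow> 'a mat \<Rightarrow> int" where
  "css_dim n HX HZ = int n - int (mrank n HX) - int (mrank n HZ)"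

definition css_dZ :: "nat \<Rightarrow> 'a::field mat \<Rightarrow> 'a mat \<Rightarrow> nat" where
  "css_dZ n HX HZ = Inf (wgt ` (orthc n (rowsp n HX) - rowsp n HZ))"

definition right_idempotent :: "nat \<Rightarrow> 'a::field mat \<Rightarrow> 'a mat \<Rightarrow> bool" where
  "right_idempotent l A FA \<longleftrightarrow> FA \<in> carrier_mat l l \<and> FA * FA = FA
     \<and> mrank l FA = mrank l A \<and> A * FA = A"

text \<open>A (l x l) is block diagonal w.r.t. a partition of {0..<l} into consecutive
  intervals of size at most m: blk assigns each index its interval, non-decreasing.\<close>
definition block_diag_le :: "nat \<Rightarrow> nat \<Rightarrow> 'a::zero mat \<Rightarrow> bool" where
  "block_diag_le l m A \<longleftrightarrow> (\<exists>blk :: nat \<Rightarrow> nat.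
      (\<forall>i j. i \<le> j \<and> j < l \<longrightarrow> blk i \<le> blk j)
    \<and> (\<forall>k. card {i. i < l \<and> blk i = k} \<le> m)
    \<and> (\<forall>i j. i < l \<and> j < l \<and> blk i \<noteq> blk j \<longrightarrow> A $$ (i, j) = 0))"

end

theory Submission
  imports Defs "Jordan_Normal_Form.Matrix_Kernel"
begin

text \<open>If every $Z$-logical operator had weight $> m$, then for each kernel vector
  $c$ of $H_X$ the restriction of $c$ to a single block -- again a kernel vector, since $H_X$ is
  block diagonal, and of weight $\le m$ -- would have to be a $Z$-stabilizer, i.e.\ lie in the row
  space of $H_Z$. Summing over the blocks, $\ker H_X$ would lie in the row space of $H_Z$, so
  $n - \mathrm{rank}\,H_X \le \mathrm{rank}\,H_Z$, contradicting that the code is non-trivial.\<close>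

lemma linear_map_mult_mat_vec:
  fixes M :: "'a::field mat"
  assumes M: "M \<in> carrier_mat r n"
  shows "linear_map class_ring (module_vec TYPE('a) n) (module_vec TYPE('a) r) (\<lambda>v. M *\<^sub>v v)"
proof (intro linear_map.intro vec_vs mod_hom.intro)
  show "Module.module class_ring (module_vec TYPE('a) n)" "Module.module class_ring (module_vec TYPE('a) r)"
    using vec_vs vectorspace.axioms by blast+
  show "mod_hom_axioms class_ring (module_vec TYPE('a) n) (module_vec TYPE('a) r) (\<lambda>v. M *\<^sub>v v)"
    unfolding mod_hom_axioms_def LinearCombinations.module_hom_def using M
    by (auto simp: mult_add_distrib_mat_vec mult_mat_vec module_vec_simps)
qed

lemma rank_plus_kernel_dim:
  fixes M :: "'a::field mat"
  assumes M: "M \<in> carrier_mat r n"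
  shows "vec_space.rank r M + kernel_dim M = n"
proof -
  interpret V: vec_space "TYPE('a)" n .
  interpret W: vec_space "TYPE('a)" r .
  interpret K: kernel r n M by (unfold_locales, rule M)
  interpret L: linear_map class_ring "module_vec TYPE('a) n" "module_vec TYPE('a) r" "\<lambda>v. M *\<^sub>v v"
    using linear_map_mult_mat_vec[OF M] .
  have "vectorspace.dim class_ring (W.vs L.imT) + vectorspace.dim class_ring (V.vs L.kerT) = n"
    using L.rank_nullity V.fin_dim V.dim_is_n by simp
  moreover have "L.imT = W.span (set (cols M))"
    using W.col_space_eq[OF M] M unfolding W.col_space_def L.im_def by auto
  moreover have "L.kerT = mat_kernel M"
    using M unfolding L.ker_def mat_kernel_def by auto
  ultimately show ?thesis using M K.kernel_dim unfolding W.rank_def by simp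
qed

lemma kernel_dim_le_dim_subspace:
  fixes A :: "'a::field mat"
  assumes A: "A \<in> carrier_mat r n"
    and Y: "submodule class_ring Y (module_vec TYPE('a) n)"
    and fin_dim: "vectorspace.fin_dim class_ring ((module_vec TYPE('a) n)\<lparr>carrier := Y\<rparr>)"
    and ker: "mat_kernel A \<subseteq> Y"
  shows "kernel_dim A \<le> vectorspace.dim class_ring ((module_vec TYPE('a) n)\<lparr>carrier := Y\<rparr>)"
proof -
  interpret V: vec_space "TYPE('a)" n .
  interpret K: kernel r n A by (unfold_locales, rule A)
  obtain Bs where fin: "finite Bs" and basis: "K.basis Bs" using kernel_basis_exists[OF A] by auto
  have Bs_ker: "Bs \<subseteq> mat_kernel A" using basis unfolding K.Ker.basis_def by auto
  have "V.lin_indpt Bs" using basis K.lindep_same[OF Bs_ker] unfolding K.Ker.basis_def by auto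
  then have indpt: "\<not> module.lin_dep class_ring (V.vs Y) Bs"
    using V.span_li_not_depend(2)[OF _ Y] Bs_ker ker by auto
  have "vectorspace class_ring (V.vs Y)"
    using V.subspace_is_vs[of Y] Y V.vectorspace_axioms unfolding subspace_def by simp
  then have "card Bs \<le> vectorspace.dim class_ring (V.vs Y)"
    using vectorspace.li_le_dim(2)[OF _ fin_dim _ indpt] Bs_ker ker by auto
  then show ?thesis using K.kernel_dim K.Ker.dim_basis[OF fin basis] by simp
qed

lemma kernel_dim_le_rank:
  fixes A M :: "'a::field mat"
  assumes A: "A \<in> carrier_mat r n" and M: "M \<in> carrier_mat n k"
    and ker: "mat_kernel A \<subseteq> vec_space.col_space n M"
  shows "kernel_dim A \<le> vec_space.rank n M"
proof -
  interpret V: vec_space "TYPE('a)" n .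
  have "set (cols M) \<subseteq> carrier_vec n" using M cols_dim by blast
  then have "submodule class_ring (V.span (set (cols M))) V.V" using V.span_is_submodule by simp
  from kernel_dim_le_dim_subspace[OF A this V.fin_dim_span_cols[OF M]] ker
  show ?thesis unfolding V.rank_def V.col_space_def by simp
qed

lemma kernel_dim_mono:
  fixes A M :: "'a::field mat"
  assumes A: "A \<in> carrier_mat r n" and M: "M \<in> carrier_mat k n"
    and ker: "mat_kernel A \<subseteq> mat_kernel M"
  shows "kernel_dim A \<le> kernel_dim M"
proof -
  interpret V: vec_space "TYPE('a)" n .
  interpret K: kernel k n M by (unfold_locales, rule M)
  interpret L: linear_map class_ring "module_vec TYPE('a) n" "module_vec TYPE('a) k" "\<lambda>v. M *\<^sub>v v"
    using linear_map_mult_mat_vec[OF M] .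
  have "L.kerT = mat_kernel M"
    using M unfolding L.ker_def mat_kernel_def by (auto simp: module_vec_simps)
  then have Y: "submodule class_ring (mat_kernel M) V.V"
    using L.kerT_is_subspace unfolding subspace_def by simp
  obtain Bs where "finite Bs" and "K.basis Bs" using kernel_basis_exists[OF M] by auto
  then have "vectorspace.fin_dim class_ring (V.vs (mat_kernel M))"
    unfolding K.Ker.fin_dim_def K.Ker.basis_def by auto
  from kernel_dim_le_dim_subspace[OF A Y this ker] show ?thesis by simp
qed

lemma (in vec_space) subset_span_maximal_lin_indpt:
  assumes X: "X \<subseteq> carrier_vec n" and S: "maximal S (\<lambda>T. T \<subseteq> X \<and> lin_indpt T)"
  shows "X \<subseteq> span S"
proof
  fix x assume x: "x \<in> X"
  have SX: "S \<subseteq> X" and indpt: "lin_indpt S" using S unfolding maximal_def by auto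
  show "x \<in> span S"
  proof (rule ccontr)
    assume x_span: "x \<notin> span S"
    then have "x \<notin> S" using in_own_span SX X by blast
    with x_span have "lin_indpt (S \<union> {x})"
      using lin_dep_iff_in_span[OF _ indpt] SX X x by auto
    then have "S \<union> {x} = S" using S SX x unfolding maximal_def by auto
    with \<open>x \<notin> S\<close> show False by auto
  qed
qed

lemma (in vec_space) mat_kernel_eq_orthogonal_complement_rows:
  assumes M: "M \<in> carrier_mat r n"
  shows "mat_kernel M = orthogonal_complement (set (rows M))"
proof (intro equalityI subsetI)
  fix v assume "v \<in> mat_kernel M"
  with M have v: "v \<in> carrier_vec n" and "M *\<^sub>v v = 0\<^sub>v r" by (auto dest: mat_kernelD)
  then have "v \<bullet> row M i = 0" if "i < r" for i
    using that M comm_scalar_prod[OF _ v, of "row M i"] by (metis carrier_matD index_mult_mat_vec index_zero_vec(1) row_carrier)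
  then show "v \<in> orthogonal_complement (set (rows M))"
    using M v unfolding orthogonal_complement_def by (auto simp: rows_def)
next
  fix v assume "v \<in> orthogonal_complement (set (rows M))"
  then have v: "v \<in> carrier_vec n" and "\<forall>i<r. v \<bullet> row M i = 0"
    using M unfolding orthogonal_complement_def by (auto simp: rows_def)
  then have "M *\<^sub>v v = 0\<^sub>v r"
    using M comm_scalar_prod[OF _ v] by (intro eq_vecI) auto
  with M v show "v \<in> mat_kernel M" by (intro mat_kernelI)
qed

lemma (in vec_space) mat_kernel_mat_of_rows_subset:
  assumes xs: "set xs \<subseteq> carrier_vec n" and M: "M \<in> carrier_mat r n"
    and rows: "set (rows M) \<subseteq> span (set xs)"
  shows "mat_kernel (mat_of_rows n xs) \<subseteq> mat_kernel M"
proof -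
  have "mat_kernel (mat_of_rows n xs) = orthogonal_complement (span (set xs))"
    using mat_kernel_eq_orthogonal_complement_rows[of "mat_of_rows n xs" "length xs"] xs by simp
  also have "\<dots> \<subseteq> orthogonal_complement (set (rows M))"
    using orthogonal_complement_subset[OF rows] .
  finally show ?thesis using mat_kernel_eq_orthogonal_complement_rows[OF M] by simp
qed

lemma rank_le_dim_row:
  fixes N :: "'a::field mat"
  assumes N: "N \<in> carrier_mat k n"
  shows "vec_space.rank k N \<le> k"
proof -
  interpret W: vec_space "TYPE('a)" k .
  have cols: "set (cols N) \<subseteq> carrier_vec k" using N cols_dim by blast
  have "W.rank N \<le> W.dim"
    using W.subspace_dim[OF W.span_is_subspace[OF cols] W.fin_dim W.fin_dim_span_cols[OF N]]
    unfolding W.rank_def .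
  then show ?thesis using W.dim_is_n by simp
qed

text \<open>A maximal independent set of rows of $M$, stacked into a matrix $N$, gives
  $\ker N \subseteq \ker M$; rank--nullity then compares the two ranks.\<close>
lemma rank_le_rank_transpose:
  fixes M :: "'a::field mat"
  assumes M: "M \<in> carrier_mat r n"
  shows "vec_space.rank r M \<le> vec_space.rank n (transpose_mat M)"
proof -
  interpret V: vec_space "TYPE('a)" n .
  have MT: "transpose_mat M \<in> carrier_mat n r" using M by simp
  have rows: "set (rows M) \<subseteq> carrier_vec n" using M by (auto simp: rows_def)
  obtain S where S: "maximal S (\<lambda>T. T \<subseteq> set (rows M) \<and> V.lin_indpt T)"
    using maximal_exists[of "\<lambda>T. T \<subseteq> set (rows M) \<and> V.lin_indpt T" "card (set (rows M))" "{}"]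
    by (meson List.finite_set card_mono empty_iff empty_subsetI V.finite_lin_indpt2 rev_finite_subset)
  then have rank_MT: "V.rank (transpose_mat M) = card S"
    using V.rank_card_indpt[OF MT] by (simp add: cols_transpose)
  have SM: "S \<subseteq> set (rows M)" using S unfolding maximal_def by auto
  obtain xs where xs: "set xs = S" "distinct xs" using finite_distinct_list[OF finite_subset[OF SM]] by auto
  define N where "N = mat_of_rows n xs"
  have N: "N \<in> carrier_mat (card S) n" unfolding N_def using xs distinct_card by fastforce
  have "mat_kernel N \<subseteq> mat_kernel M"
    unfolding N_def using V.mat_kernel_mat_of_rows_subset[OF _ M] V.subset_span_maximal_lin_indpt[OF rows S]
      xs SM rows by auto
  then have "kernel_dim N \<le> kernel_dim M" using kernel_dim_mono[OF N M] by simp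
  with rank_plus_kernel_dim[OF M] rank_plus_kernel_dim[OF N] rank_le_dim_row[OF N] rank_MT
  show ?thesis by linarith
qed

lemma kernel_dim_le_mrank:
  fixes A H :: "'a::field mat"
  assumes A: "A \<in> carrier_mat r n" and H: "H \<in> carrier_mat n n"
    and ker: "mat_kernel A \<subseteq> rowsp n H"
  shows "kernel_dim A \<le> mrank n H"
proof -
  have HT: "transpose_mat H \<in> carrier_mat n n" using H by simp
  have "kernel_dim A \<le> vec_space.rank n (transpose_mat H)"
    using kernel_dim_le_rank[OF A HT] ker
    unfolding rowsp_def vec_space.row_space_eq_col_space_transpose .
  also have "\<dots> \<le> vec_space.rank n H"
    using rank_le_rank_transpose[OF HT] by simp
  finally show ?thesis unfolding mrank_def .
qed

lemma mat_kernel_subset_orthc_rowsp: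
  fixes A :: "'a::field mat"
  assumes A: "A \<in> carrier_mat r n"
  shows "mat_kernel A \<subseteq> orthc n (rowsp n A)"
proof
  interpret V: vec_space "TYPE('a)" n .
  have rows: "set (rows A) \<subseteq> carrier_vec n" using A by (auto simp: rows_def)
  fix c assume "c \<in> mat_kernel A"
  then have c: "c \<in> V.orthogonal_complement (V.span (set (rows A)))"
    using V.mat_kernel_eq_orthogonal_complement_rows[OF A] rows by simp
  have "y \<bullet> c = 0" if "y \<in> V.span (set (rows A))" for y
    using that c V.span_closed[OF rows] comm_scalar_prod[of y n c]
    unfolding V.orthogonal_complement_def by auto
  then show "c \<in> orthc n (rowsp n A)"
    using c unfolding orthc_def rowsp_def V.row_space_def V.orthogonal_complement_def by auto
qed

lemma css_dZ_le_wgt: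
  assumes "c \<in> orthc n (rowsp n HX) - rowsp n HZ"
  shows "css_dZ n HX HZ \<le> wgt c"
  unfolding css_dZ_def using assms by (intro cInf_lower) auto

definition block_part :: "(nat \<Rightarrow> nat) \<Rightarrow> nat \<Rightarrow> 'a::zero vec \<Rightarrow> 'a vec" where
  "block_part blk k c = vec (dim_vec c) (\<lambda>i. if blk i = k then c $ i else 0)"

lemma wgt_block_part: "wgt (block_part blk k c) \<le> card {i. i < dim_vec c \<and> blk i = k}"
  unfolding wgt_def block_part_def by (intro card_mono) (auto split: if_splits)

lemma mult_mat_vec_block_part:
  fixes A :: "'a::comm_ring_1 mat"
  assumes A: "A \<in> carrier_mat r n" and c: "c \<in> carrier_vec n"
    and block: "\<And>i j. i < r \<Longrightarrow> j < n \<Longrightarrow> blk i \<noteq> blk j \<Longrightarrow> A $$ (i, j) = 0"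
  shows "A *\<^sub>v block_part blk k c = block_part blk k (A *\<^sub>v c)"
proof (rule eq_vecI)
  fix i assume "i < dim_vec (block_part blk k (A *\<^sub>v c))"
  then have i: "i < r" using A by (simp add: block_part_def)
  have "(A *\<^sub>v block_part blk k c) $ i = (\<Sum>j<n. A $$ (i, j) * block_part blk k c $ j)"
    using A c i by (simp add: scalar_prod_def block_part_def lessThan_atLeast0)
  also have "\<dots> = (\<Sum>j<n. if blk i = k then A $$ (i, j) * c $ j else 0)"
    using c by (intro sum.cong) (auto simp: block_part_def block i)
  also have "\<dots> = block_part blk k (A *\<^sub>v c) $ i"
    using A c i by (simp add: scalar_prod_def block_part_def lessThan_atLeast0)
  finally show "(A *\<^sub>v block_part blk k c) $ i = block_part blk k (A *\<^sub>v c) $ i" .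
qed (use A c in \<open>simp add: block_part_def\<close>)

lemma block_part_mat_kernel:
  fixes A :: "'a::field mat"
  assumes A: "A \<in> carrier_mat r n" and c: "c \<in> mat_kernel A"
    and block: "\<And>i j. i < r \<Longrightarrow> j < n \<Longrightarrow> blk i \<noteq> blk j \<Longrightarrow> A $$ (i, j) = 0"
  shows "block_part blk k c \<in> mat_kernel A"
proof -
  have cc: "c \<in> carrier_vec n" and Ac: "A *\<^sub>v c = 0\<^sub>v r" using mat_kernelD[OF A c] by auto
  then have "A *\<^sub>v block_part blk k c = 0\<^sub>v r"
    using mult_mat_vec_block_part[OF A cc block] by (auto simp: block_part_def)
  with A cc show ?thesis by (intro mat_kernelI) (auto simp: block_part_def)
qed

lemma (in vec_space) mem_submodule_if_block_parts:
  assumes Y: "submodule class_ring Y V" and c: "c \<in> carrier_vec n"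
    and parts: "\<And>k. block_part blk k c \<in> Y"
  shows "c \<in> Y"
proof -
  have partial: "vec n (\<lambda>i. if blk i < j then c $ i else 0) \<in> Y" for j
  proof (induction j)
    case 0
    then show ?case using submodule.zero_closed[OF Y] by (simp add: zero_vec_def)
  next
    case (Suc j)
    have "vec n (\<lambda>i. if blk i < Suc j then c $ i else 0) =
        vec n (\<lambda>i. if blk i < j then c $ i else 0) + block_part blk j c"
      using c by (auto simp: block_part_def less_Suc_eq)
    then show ?case using submodule.m_closed[OF Y Suc parts] by simp
  qed
  have "vec n (\<lambda>i. if blk i < Suc (\<Sum>i<n. blk i) then c $ i else 0) = c"
  proof (rule eq_vecI)
    fix i assume "i < dim_vec c"
    then have "i < n" "blk i \<le> (\<Sum>i<n. blk i)" using c by (auto intro: member_le_sum)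
    then show "vec n (\<lambda>i. if blk i < Suc (\<Sum>i<n. blk i) then c $ i else 0) $ i = c $ i" by simp
  qed (use c in simp)
  then show ?thesis using partial by metis
qed

theorem css_dZ_le_block_size:
  fixes HX HZ :: "'a::field mat"
  assumes HX: "HX \<in> carrier_mat n n" and HZ: "HZ \<in> carrier_mat n n"
    and block_diag: "block_diag_le n m HX" and nontrivial: "css_dim n HX HZ > 0"
  shows "css_dZ n HX HZ \<le> m"
proof (rule ccontr)
  interpret V: vec_space "TYPE('a)" n .
  assume "\<not> ?thesis"
  then have heavy: "m < wgt c" if "c \<in> orthc n (rowsp n HX) - rowsp n HZ" for c
    using css_dZ_le_wgt[OF that] by linarith
  obtain blk :: "nat \<Rightarrow> nat" where
    block_size: "\<And>k. card {i. i < n \<and> blk i = k} \<le> m" and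
    block: "\<And>i j. i < n \<Longrightarrow> j < n \<Longrightarrow> blk i \<noteq> blk j \<Longrightarrow> HX $$ (i, j) = 0"
    using block_diag unfolding block_diag_le_def by blast
  have "set (rows HZ) \<subseteq> carrier_vec n" using HZ by (auto simp: rows_def)
  then have Y: "submodule class_ring (rowsp n HZ) V.V"
    unfolding rowsp_def V.row_space_def by (rule V.span_is_submodule)
  have "mat_kernel HX \<subseteq> rowsp n HZ"
  proof
    fix c assume c: "c \<in> mat_kernel HX"
    then have cc: "c \<in> carrier_vec n" using mat_kernelD[OF HX] by blast
    have "block_part blk k c \<in> rowsp n HZ" for k
    proof -
      have "block_part blk k c \<in> orthc n (rowsp n HX)"
        using mat_kernel_subset_orthc_rowsp[OF HX] block_part_mat_kernel[OF HX c block] by blast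
      moreover have "wgt (block_part blk k c) \<le> m"
        using wgt_block_part[of blk k c] block_size[of k] cc by simp
      ultimately show ?thesis using heavy by force
    qed
    then show "c \<in> rowsp n HZ" using V.mem_submodule_if_block_parts[OF Y cc] by blast
  qed
  then have "kernel_dim HX \<le> mrank n HZ" using kernel_dim_le_mrank[OF HX HZ] by blast
  with rank_plus_kernel_dim[OF HX] nontrivial show False
    unfolding css_dim_def mrank_def by linarith
qed

text \<open>Commutation of $A$ and $B$ and idempotency of $F_A$ only make $Q''_L$ a stabilizer code;
  the distance bound needs nothing but square check matrices.\<close>
theorem mainTheorem5:
  fixes A B FA :: "'a::{field,finite} mat" and l m :: nat
  assumes "A \<in> carrier_mat l l" and "B \<in> carrier_mat l l"
    and "A * B = B * A"
    and "right_idempotent l A FA"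
    and "block_diag_le l m A"
    and "css_dim l A (transpose_mat (B * (1\<^sub>m l - FA))) > 0"
  shows "css_dZ l A (transpose_mat (B * (1\<^sub>m l - FA))) \<le> m"
proof (rule css_dZ_le_block_size)
  have "FA \<in> carrier_mat l l" using assms(4) unfolding right_idempotent_def by blast
  with assms(2) have "B * (1\<^sub>m l - FA) \<in> carrier_mat l l" by auto
  then show "transpose_mat (B * (1\<^sub>m l - FA)) \<in> carrier_mat l l" by simp
qed (use assms in auto)
end
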